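(* Let $n\ge 3$ and let $D$ be a strongly connected spanning subdigraph of $\overleftrightarrow{C_n}$ having $k\ge 1$ asymmetric arcs. Then $rc^*(D)=n-1$ if $k\le 2$, and $rc^*(D)=n$ if $k\ge 3$. Moreover, if $k\ge 3$, then $rc^*(D)=src^*(D)=n$.
   Context: $\overleftrightarrow{C_n}$ denotes the biorientation of the cycle $C_n$ on $n$ vertices (each edge $uv$ replaced by arcs $uv$ and $vu$). An arc $uv$ of a digraph $D$ is asymmetric if $vu\notin A(D)$. For a strongly connected digraph $D$ and an arc-colouring $\Gamma:A(D)\to\{1,\dots,k\}$, a directed path is rainbow if its arcs have pairwise distinct colours. $\Gamma$ is rainbow connected if for every ordered pair of distinct vertices $x,y$ there is a rainbow directed $xy$-path; $rc^*(D)$ is the minimum $k$ admitting such a colouring. $\Gamma$ is strongly rainbow connected if for every ordered pair of distinct vertices $x,y$ there is a rainbow directed $xy$-path of length $d_D(x,y)$; $src^*(D)$ is the minimum such $k$. *)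

theory Defs
  imports Main
begin

definition bicycle_arcs :: "nat \<Rightarrow> (nat \<times> nat) set" where
  "bicycle_arcs n = {(i, Suc i mod n) | i. i < n} \<union> {(Suc i mod n, i) | i. i < n}"

definition asym_arcs :: "('a \<times> 'a) set \<Rightarrow> ('a \<times> 'a) set" where
  "asym_arcs A = {(u, v). (u, v) \<in> A \<and> (v, u) \<notin> A}"

definition dpath :: "('a \<times> 'a) set \<Rightarrow> 'a list \<Rightarrow> 'a \<Rightarrow> 'a \<Rightarrow> bool" where
  "dpath A p x y \<longleftrightarrow> p \<noteq> [] \<and> hd p = x \<and> last p = y \<and> distinct p \<and>
     (\<forall>i < length p - 1. (p ! i, p ! Suc i) \<in> A)"

definition path_arcs :: "'a list \<Rightarrow> ('a \<times> 'a) list" where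
  "path_arcs p = zip p (tl p)"

definition plen :: "'a list \<Rightarrow> nat" where
  "plen p = length p - 1"

definition rainbow :: "('a \<times> 'a \<Rightarrow> nat) \<Rightarrow> 'a list \<Rightarrow> bool" where
  "rainbow c p \<longleftrightarrow> distinct (map c (path_arcs p))"

definition strongly_connected :: "'a set \<Rightarrow> ('a \<times> 'a) set \<Rightarrow> bool" where
  "strongly_connected V A \<longleftrightarrow> A \<subseteq> V \<times> V \<and>
     (\<forall>x\<in>V. \<forall>y\<in>V. x \<noteq> y \<longrightarrow> (\<exists>p. dpath A p x y))"

definition ddist :: "('a \<times> 'a) set \<Rightarrow> 'a \<Rightarrow> 'a \<Rightarrow> nat" where
  "ddist A x y = (LEAST l. \<exists>p. dpath A p x y \<and> plen p = l)"

definition arc_colouring :: "('a \<times> 'a) set \<Rightarrow> ('a \<times> 'a \<Rightarrow> nat) \<Rightarrow> nat \<Rightarrow> bool" where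
  "arc_colouring A c k \<longleftrightarrow> (\<forall>e\<in>A. c e \<in> {1..k})"

definition rainbow_connected :: "'a set \<Rightarrow> ('a \<times> 'a) set \<Rightarrow> ('a \<times> 'a \<Rightarrow> nat) \<Rightarrow> nat \<Rightarrow> bool" where
  "rainbow_connected V A c k \<longleftrightarrow> arc_colouring A c k \<and>
     (\<forall>x\<in>V. \<forall>y\<in>V. x \<noteq> y \<longrightarrow> (\<exists>p. dpath A p x y \<and> rainbow c p))"

definition strongly_rainbow_connected :: "'a set \<Rightarrow> ('a \<times> 'a) set \<Rightarrow> ('a \<times> 'a \<Rightarrow> nat) \<Rightarrow> nat \<Rightarrow> bool" where
  "strongly_rainbow_connected V A c k \<longleftrightarrow> arc_colouring A c k \<and>
     (\<forall>x\<in>V. \<forall>y\<in>V. x \<noteq> y \<longrightarrow>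
        (\<exists>p. dpath A p x y \<and> plen p = ddist A x y \<and> rainbow c p))"

definition rc :: "'a set \<Rightarrow> ('a \<times> 'a) set \<Rightarrow> nat" where
  "rc V A = (LEAST k. \<exists>c. rainbow_connected V A c k)"

definition src :: "'a set \<Rightarrow> ('a \<times> 'a) set \<Rightarrow> nat" where
  "src V A = (LEAST k. \<exists>c. strongly_rainbow_connected V A c k)"

end

theory Submission
  imports Defs
begin

text \<open>If \<open>(t, t + s)\<close> is an asymmetric arc (\<open>s = \<plusminus>1\<close>), the only path from \<open>t + s\<close> to \<open>t\<close>
  runs once round the cycle in direction \<open>s\<close>. Hence all arcs \<open>(w, w + s)\<close> are present, every
  asymmetric arc points in direction \<open>s\<close>, and a rainbow colouring gives the arcs \<open>(w, w + s)\<close>,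
  \<open>w \<noteq> t\<close>, distinct colours: \<open>rc \<ge> n - 1\<close>, and \<open>rc \<ge> n\<close> once three such \<open>t\<close> exist.
  Conversely, giving both arcs of the \<open>w\<close>-th edge of the cycle colour \<open>w\<close> makes every path
  rainbow, so \<open>src \<le> n\<close>. If all asymmetric arcs start at \<open>ta\<close> or \<open>tb\<close>, the edges at \<open>ta\<close> and
  \<open>tb\<close> may even share a colour: the path from \<open>x\<close> to \<open>y\<close> in direction \<open>s\<close> is rainbow unless it
  uses both of them, and then the path in direction \<open>-s\<close> avoids both and uses only symmetric
  edges.\<close>

lemma path_arcs_nth: "i < length p - 1 \<Longrightarrow> path_arcs p ! i = (p ! i, p ! Suc i)"
  unfolding path_arcs_def by (simp add: nth_tl)

lemma length_path_arcs: "length (path_arcs p) = length p - 1"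
  unfolding path_arcs_def by simp

lemma path_arcs_map_upt: "path_arcs (map f [0..<Suc d]) = map (\<lambda>i. (f i, f (Suc i))) [0..<d]"
  by (rule nth_equalityI) (simp_all add: length_path_arcs path_arcs_nth del: upt_Suc)

lemma dpath_arcs_subset: "dpath A p x y \<Longrightarrow> set (path_arcs p) \<subseteq> A"
  unfolding dpath_def by (auto simp: in_set_conv_nth length_path_arcs path_arcs_nth)

lemma dpath_map_upt:
  assumes "inj_on f {0..<Suc d}" "\<And>i. i < d \<Longrightarrow> (f i, f (Suc i)) \<in> A"
  shows "dpath A (map f [0..<Suc d]) (f 0) (f d)"
  unfolding dpath_def using assms by (auto simp: distinct_map last_map hd_map simp del: upt_Suc)

lemma rainbow_comp_iff:
  "rainbow (h \<circ> f) p \<longleftrightarrow> distinct (map f (path_arcs p)) \<and> inj_on h (f ` set (path_arcs p))"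
  unfolding rainbow_def by (simp add: distinct_map flip: map_map)

lemma rainbow_connected_dpath:
  "\<lbrakk>rainbow_connected V A c k; x \<in> V; y \<in> V; x \<noteq> y\<rbrakk> \<Longrightarrow> \<exists>p. dpath A p x y \<and> rainbow c p"
  unfolding rainbow_connected_def by blast

lemma rainbow_connected_colour_range:
  "\<lbrakk>rainbow_connected V A c k; e \<in> A\<rbrakk> \<Longrightarrow> c e \<in> {1..k}"
  unfolding rainbow_connected_def arc_colouring_def by blast

lemma strongly_connected_dpath:
  "\<lbrakk>strongly_connected V A; x \<in> V; y \<in> V; x \<noteq> y\<rbrakk> \<Longrightarrow> \<exists>p. dpath A p x y"
  unfolding strongly_connected_def by blast

lemma shortest_dpath: "dpath A p x y \<Longrightarrow> \<exists>q. dpath A q x y \<and> plen q = ddist A x y"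
  unfolding ddist_def by (rule LeastI_ex) blast

lemma rainbow_connected_if_strongly:
  "strongly_rainbow_connected V A c k \<Longrightarrow> rainbow_connected V A c k"
  unfolding strongly_rainbow_connected_def rainbow_connected_def by blast

lemma rc_eqI:
  "\<lbrakk>rainbow_connected V A c k; \<And>c' k'. rainbow_connected V A c' k' \<Longrightarrow> k \<le> k'\<rbrakk> \<Longrightarrow> rc V A = k"
  unfolding rc_def by (rule Least_equality) blast+

lemma src_eqI:
  "\<lbrakk>strongly_rainbow_connected V A c k; \<And>c' k'. strongly_rainbow_connected V A c' k' \<Longrightarrow> k \<le> k'\<rbrakk>
   \<Longrightarrow> src V A = k"
  unfolding src_def by (rule Least_equality) blast+

lemma inj_on_if_inj_on_Diff_singletons:
  assumes "3 \<le> card T" and "\<And>t. t \<in> T \<Longrightarrow> inj_on h (S - {t})"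
  shows "inj_on h S"
proof (rule inj_onI, rule ccontr)
  fix x y assume "x \<in> S" "y \<in> S" "h x = h y" "x \<noteq> y"
  then have "T \<subseteq> {x, y}" using assms(2) by (blast dest: inj_onD)
  then have "card T \<le> 2" by (metis card_2_iff card_mono finite.emptyI finite.insertI \<open>x \<noteq> y\<close>)
  then show False using assms(1) by simp
qed

lemma obtain_pair_superset:
  assumes "card T \<le> 2" "a \<in> T" "T \<subseteq> S" "finite S" "2 \<le> card S"
  obtains b where "b \<in> S" "b \<noteq> a" "T \<subseteq> {a, b}"
proof (cases "T \<subseteq> {a}")
  case True
  have "S \<noteq> {a}" using assms(5) by auto
  then obtain b where "b \<in> S" "b \<noteq> a" using assms(2,3) by blast
  then show ?thesis using that True by blast
next
  case False
  then obtain b where b: "b \<in> T" "b \<noteq> a" by blast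
  have "finite T" using assms(3,4) finite_subset by blast
  then have "card (T - {a}) \<le> Suc 0" using assms(1,2) by simp
  then have "T - {a} \<subseteq> {b}" using b \<open>finite T\<close> card_le_Suc0_iff_eq[of "T - {a}"] by blast
  then show ?thesis using that b assms(3) by blast
qed

text \<open>Colours \<open>0..<n\<close> shifted to \<open>1..n-1\<close> after identifying \<open>b\<close> with \<open>a\<close>.\<close>

definition merge_colour :: "nat \<Rightarrow> nat \<Rightarrow> nat \<Rightarrow> nat" where
  "merge_colour a b w = (let j = if w = b then a else w in if j < b then Suc j else j)"

lemma merge_colour_range: "\<lbrakk>a < n; b < n; a \<noteq> b; w < n\<rbrakk> \<Longrightarrow> merge_colour a b w \<in> {1..n - 1}"
  unfolding merge_colour_def Let_def by auto

lemma inj_on_merge_colour: "\<lbrakk>a \<noteq> b; a \<notin> S \<or> b \<notin> S\<rbrakk> \<Longrightarrow> inj_on (merge_colour a b) S"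
  unfolding merge_colour_def Let_def by (rule inj_onI) (auto split: if_splits)

locale bicycle =
  fixes n :: nat
  assumes three_le: "3 \<le> n"
begin

text \<open>A direction of the cycle is an integer \<open>s \<in> {1, -1}\<close>.\<close>

definition walk :: "int \<Rightarrow> nat \<Rightarrow> nat \<Rightarrow> nat" where
  "walk s x i = nat ((int x + int i * s) mod int n)"

definition shift :: "int \<Rightarrow> nat \<Rightarrow> nat" where
  "shift s u = walk s u 1"

definition offset :: "int \<Rightarrow> nat \<Rightarrow> nat \<Rightarrow> nat" where
  "offset s x y = nat (((int y - int x) * s) mod int n)"

lemma int_walk: "int (walk s x i) = (int x + int i * s) mod int n"
  unfolding walk_def using three_le by simp

lemma int_shift: "int (shift s u) = (int u + s) mod int n"
  by (simp add: shift_def int_walk)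

lemma walk_less: "walk s x i < n"
proof -
  have "(int x + int i * s) mod int n < int n" using three_le by simp
  then show ?thesis by (simp flip: int_walk)
qed

lemma shift_less: "shift s u < n"
  by (simp add: shift_def walk_less)

lemma walk_0: "x < n \<Longrightarrow> walk s x 0 = x"
  unfolding walk_def by simp

lemma shift_walk: "shift s (walk s x i) = walk s x (Suc i)"
proof -
  have "int (shift s (walk s x i)) = ((int x + int i * s) mod int n + s) mod int n"
    by (simp add: int_shift int_walk)
  also have "\<dots> = (int x + int i * s + s) mod int n" by (simp add: mod_add_left_eq)
  also have "\<dots> = int (walk s x (Suc i))" by (simp add: int_walk algebra_simps)
  finally show ?thesis by simp
qed

lemma shift_neg_shift: "\<lbrakk>s = 1 \<or> s = -1; w < n\<rbrakk> \<Longrightarrow> shift (-s) (shift s w) = w"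
proof -
  assume "s = 1 \<or> s = -1" "w < n"
  have "int (shift (-s) (shift s w)) = ((int w + s) mod int n - s) mod int n"
    by (simp add: int_shift)
  also have "\<dots> = int w" using \<open>w < n\<close> by (simp add: mod_diff_left_eq)
  finally show ?thesis by simp
qed

lemma shift_neg_walk: "s = 1 \<or> s = -1 \<Longrightarrow> shift (-s) (walk s x (Suc i)) = walk s x i"
  by (metis shift_neg_shift shift_walk walk_less)

lemma inj_on_walk: "s = 1 \<or> s = -1 \<Longrightarrow> inj_on (walk s x) {0..<n}"
proof (rule inj_onI)
  fix i j assume s: "s = 1 \<or> s = -1" and ij: "i \<in> {0..<n}" "j \<in> {0..<n}"
    and "walk s x i = walk s x j"
  then have "int n dvd (int x + int i * s) - (int x + int j * s)"
    by (metis int_walk mod_eq_dvd_iff)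
  then have "int n dvd (int i - int j) * s" by (simp add: algebra_simps)
  then have "int n dvd int i - int j"
    using s by (metis dvd_minus_iff mult_1_right mult_minus1_right)
  moreover have "\<bar>int i - int j\<bar> < int n" using ij by auto
  ultimately show "i = j" by (metis dvd_imp_le_int abs_of_nat not_le eq_iff_diff_eq_0 of_nat_eq_iff)
qed

lemma walk_neg: "j \<le> n \<Longrightarrow> walk (-s) x j = walk s x (n - j)"
proof -
  assume "j \<le> n"
  then have "int (walk s x (n - j)) = ((int x - int j * s) + s * int n) mod int n"
    by (simp add: int_walk of_nat_diff algebra_simps)
  also have "\<dots> = int (walk (-s) x j)" by (simp add: int_walk)
  finally show ?thesis by simp
qed

lemma walk_n_minus_1: "\<lbrakk>s = 1 \<or> s = -1; t < n\<rbrakk> \<Longrightarrow> walk s (shift s t) (n - 1) = t"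
proof -
  assume "s = 1 \<or> s = -1" "t < n"
  have "int (walk s (shift s t) (n - 1)) = ((int t + s) mod int n + (int n - 1) * s) mod int n"
    using three_le by (simp add: int_walk int_shift of_nat_diff)
  also have "\<dots> = (int t + s + (int n - 1) * s) mod int n" by (simp add: mod_add_left_eq)
  also have "\<dots> = (int t + s * int n) mod int n" by (simp add: algebra_simps)
  also have "\<dots> = int t" using \<open>t < n\<close> by simp
  finally show ?thesis by simp
qed

lemma offset_less: "offset s x y < n"
  unfolding offset_def using three_le by (simp add: nat_less_iff)

lemma walk_offset: "\<lbrakk>s = 1 \<or> s = -1; y < n\<rbrakk> \<Longrightarrow> walk s x (offset s x y) = y"
proof -
  assume s: "s = 1 \<or> s = -1" and "y < n"
  have "int (walk s x (offset s x y)) = (int x + ((int y - int x) * s) mod int n * s) mod int n"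
    unfolding int_walk offset_def using three_le by simp
  also have "\<dots> = (int x + (int y - int x) * s * s) mod int n"
    by (metis mod_add_right_eq mod_mult_left_eq)
  also have "\<dots> = int y" using s \<open>y < n\<close> by auto
  finally show ?thesis by simp
qed

lemma offset_neq_0: "\<lbrakk>s = 1 \<or> s = -1; x < n; y < n; x \<noteq> y\<rbrakk> \<Longrightarrow> offset s x y \<noteq> 0"
  by (metis walk_offset walk_0)

lemma shift_neq_self: "\<lbrakk>s = 1 \<or> s = -1; u < n\<rbrakk> \<Longrightarrow> shift s u \<noteq> u"
proof
  assume "s = 1 \<or> s = -1" "u < n" and "shift s u = u"
  then have "int n dvd (int u + s) - int u"
    by (metis int_shift mod_eq_dvd_iff mod_less of_nat_mod)
  then have "int n dvd 1" using \<open>s = 1 \<or> s = -1\<close> by auto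
  then show False using three_le by simp
qed

lemma shift_neq_shift_neg: "s = 1 \<or> s = -1 \<Longrightarrow> shift s u \<noteq> shift (-s) u"
proof
  assume "s = 1 \<or> s = -1" and "shift s u = shift (-s) u"
  then have "int n dvd (int u + s) - (int u - s)"
    by (metis int_shift diff_conv_add_uminus mod_eq_dvd_iff)
  then have "int n dvd 2" using \<open>s = 1 \<or> s = -1\<close> by auto
  then show False using three_le zdvd_imp_le[of "int n" 2] by simp
qed

lemma bicycle_arcs_iff:
  assumes "s = 1 \<or> s = -1"
  shows "(u, v) \<in> bicycle_arcs n \<longleftrightarrow> u < n \<and> (v = shift s u \<or> v = shift (-s) u)"
proof -
  have shift_1: "shift 1 w = Suc w mod n" for w
  proof -
    have "int (shift 1 w) = int (Suc w mod n)" by (simp add: int_shift of_nat_mod add.commute)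
    then show ?thesis by simp
  qed
  have "(u, v) \<in> bicycle_arcs n \<longleftrightarrow> u < n \<and> (v = shift 1 u \<or> u = shift 1 v \<and> v < n)"
    unfolding bicycle_arcs_def shift_1 by auto
  also have "\<dots> \<longleftrightarrow> u < n \<and> (v = shift 1 u \<or> v = shift (-1) u)"
  proof -
    have "u = shift 1 v \<and> v < n \<longleftrightarrow> v = shift (-1) u" if "u < n"
      using that shift_neg_shift[of 1 v] shift_neg_shift[of "-1" u] shift_less[of "-1" u] by auto
    then show ?thesis by blast
  qed
  finally show ?thesis using assms by auto
qed

lemma dpath_bicycle_walk:
  assumes "B \<subseteq> bicycle_arcs n" and "dpath B p x y" and "x < n"
  obtains s where "s = 1 \<or> s = -1" and "\<And>i. i < length p \<Longrightarrow> p ! i = walk s x i"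
proof -
  have ne: "p \<noteq> []" and dist: "distinct p"
    and arc: "\<And>i. Suc i < length p \<Longrightarrow> (p ! i, p ! Suc i) \<in> bicycle_arcs n"
    using assms unfolding dpath_def by auto
  have p0: "p ! 0 = x" using assms(2) ne unfolding dpath_def by (simp add: hd_conv_nth)
  show ?thesis
  proof (cases "length p = 1")
    case True
    then show ?thesis using that[of 1] p0 \<open>x < n\<close> by (simp add: walk_0)
  next
    case False
    then have l2: "Suc 0 < length p" using ne by (cases p) auto
    from arc[OF l2] p0 obtain s where s: "s = 1 \<or> s = -1" and p1: "p ! 1 = shift s x"
      using bicycle_arcs_iff[of 1] by auto
    have "Suc i < length p \<longrightarrow> p ! i = walk s x i \<and> p ! Suc i = walk s x (Suc i)" for i
    proof (induction i)
      case 0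
      then show ?case using p0 p1 \<open>x < n\<close> by (simp add: walk_0 flip: shift_walk)
    next
      case (Suc i)
      show ?case
      proof
        assume l: "Suc (Suc i) < length p"
        then have IH: "p ! i = walk s x i" "p ! Suc i = walk s x (Suc i)" using Suc by auto
        have "p ! Suc (Suc i) = shift s (p ! Suc i) \<or> p ! Suc (Suc i) = shift (-s) (p ! Suc i)"
          using arc[OF l] bicycle_arcs_iff[OF s] by auto
        moreover have "p ! Suc (Suc i) \<noteq> p ! i" using dist l nth_eq_iff_index_eq by fastforce
        moreover have "shift (-s) (p ! Suc i) = p ! i" using IH shift_neg_walk[OF s] by simp
        ultimately show "p ! Suc i = walk s x (Suc i) \<and> p ! Suc (Suc i) = walk s x (Suc (Suc i))"
          using IH by (simp add: shift_walk)
      qed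
    qed
    then have "p ! i = walk s x i" if "i < length p" for i
      using that l2 by (cases i) auto
    then show ?thesis using that s by blast
  qed
qed

lemma length_walk_le:
  assumes "\<And>i. i < length p \<Longrightarrow> p ! i = walk s x i" and "distinct p"
  shows "length p \<le> n"
proof -
  have "set p \<subseteq> {0..<n}" using assms(1) walk_less by (auto simp: in_set_conv_nth)
  then show ?thesis using card_mono[of "{0..<n}" "set p"] distinct_card[OF assms(2)] by simp
qed

lemma dpath_around:
  assumes s: "s = 1 \<or> s = -1" and "t < n" and B: "B \<subseteq> bicycle_arcs n"
    and no_back: "(shift s t, t) \<notin> B" and dp: "dpath B p (shift s t) t"
  shows "p = map (walk s (shift s t)) [0..<n]"
proof -
  let ?v = "shift s t"
  obtain s' where s': "s' = 1 \<or> s' = -1" and P: "\<And>i. i < length p \<Longrightarrow> p ! i = walk s' ?v i"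
    using dpath_bicycle_walk[OF B dp shift_less] by blast
  have ne: "p \<noteq> []" and dist: "distinct p"
    and arc: "\<And>i. Suc i < length p \<Longrightarrow> (p ! i, p ! Suc i) \<in> B"
    and p0: "p ! 0 = ?v" and p_last: "p ! (length p - 1) = t"
    using dp unfolding dpath_def by (auto simp: hd_conv_nth last_conv_nth)
  have "length p \<noteq> 1" using p0 p_last shift_neq_self[OF s \<open>t < n\<close>] by auto
  then have l2: "Suc 0 < length p" using ne by (cases p) auto
  have "s' = s"
  proof (rule ccontr)
    assume "s' \<noteq> s"
    then have "p ! 1 = t"
      using P[OF l2] s s' shift_neg_shift[OF s \<open>t < n\<close>] by (auto simp: walk_0 shift_less simp flip: shift_walk)
    then have "1 = length p - 1" using nth_eq_iff_index_eq[OF dist, of 1 "length p - 1"] p_last l2 by simp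
    then have "length p = 2" by simp
    then show False using arc[of 0] p0 \<open>p ! 1 = t\<close> no_back by simp
  qed
  then have "walk s ?v (length p - 1) = walk s ?v (n - 1)"
    using P p_last walk_n_minus_1[OF s \<open>t < n\<close>] l2 by simp
  then have "length p = n"
    using inj_onD[OF inj_on_walk[OF s]] length_walk_le[OF P dist] l2 three_le by fastforce
  then show ?thesis using P \<open>s' = s\<close> by (simp add: nth_equalityI)
qed

definition edge_index :: "int \<Rightarrow> nat \<times> nat \<Rightarrow> nat" where
  "edge_index s e = (if snd e = shift s (fst e) then fst e else snd e)"

lemma edge_index_forward [simp]: "edge_index s (w, shift s w) = w"
  unfolding edge_index_def by simp

lemma edge_index_backward: "\<lbrakk>s = 1 \<or> s = -1; w < n\<rbrakk> \<Longrightarrow> edge_index s (shift s w, w) = w"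
  unfolding edge_index_def using shift_neq_shift_neg[of s "shift s w"] shift_neg_shift by auto

lemma bicycle_arc_cases:
  assumes s: "s = 1 \<or> s = -1" and "(u, v) \<in> bicycle_arcs n"
  obtains w where "w < n" "edge_index s (u, v) = w" "(u, v) = (w, shift s w) \<or> (u, v) = (shift s w, w)"
proof -
  have "u < n" and "v = shift s u \<or> v = shift (-s) u" using assms bicycle_arcs_iff[OF s] by auto
  then consider "v = shift s u" | "u = shift s v" "v < n"
    using shift_neg_shift[of "-s" u] s shift_less by fastforce
  then show ?thesis using that \<open>u < n\<close> edge_index_backward[OF s] by cases auto
qed

lemma edge_index_eq:
  assumes s: "s = 1 \<or> s = -1" and "(u, v) \<in> bicycle_arcs n" "(u', v') \<in> bicycle_arcs n"
    and "edge_index s (u, v) = edge_index s (u', v')"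
  shows "(u', v') = (u, v) \<or> (u', v') = (v, u)"
proof -
  obtain w where "(u, v) = (w, shift s w) \<or> (u, v) = (shift s w, w)" "edge_index s (u, v) = w"
    using bicycle_arc_cases[OF s assms(2)] by blast
  moreover obtain w' where "(u', v') = (w', shift s w') \<or> (u', v') = (shift s w', w')"
    "edge_index s (u', v') = w'"
    using bicycle_arc_cases[OF s assms(3)] by blast
  ultimately show ?thesis using assms(4) by auto
qed

lemma distinct_edge_indices:
  assumes s: "s = 1 \<or> s = -1" and "B \<subseteq> bicycle_arcs n" and "dpath B p x y"
  shows "distinct (map (edge_index s) (path_arcs p))"
  unfolding distinct_conv_nth length_map length_path_arcs
proof (intro allI impI)
  fix i j assume i: "i < length p - 1" and j: "j < length p - 1" and "i \<noteq> j"
  have dist: "distinct p" and arc: "\<And>k. k < length p - 1 \<Longrightarrow> (p ! k, p ! Suc k) \<in> bicycle_arcs n"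
    using assms unfolding dpath_def by auto
  have "p ! j = p ! i \<longleftrightarrow> j = i" "p ! j = p ! Suc i \<longleftrightarrow> j = Suc i" "p ! Suc j = p ! i \<longleftrightarrow> Suc j = i"
    using nth_eq_iff_index_eq[OF dist] i j by auto
  then have "(p ! j, p ! Suc j) \<noteq> (p ! i, p ! Suc i) \<and> (p ! j, p ! Suc j) \<noteq> (p ! Suc i, p ! i)"
    using \<open>i \<noteq> j\<close> by auto
  then show "map (edge_index s) (path_arcs p) ! i \<noteq> map (edge_index s) (path_arcs p) ! j"
    using edge_index_eq[OF s arc[OF i] arc[OF j]] i j by (auto simp: path_arcs_nth length_path_arcs)
qed

lemma path_arcs_walk:
  "path_arcs (map (walk s x) [0..<Suc d]) = map (\<lambda>i. (walk s x i, shift s (walk s x i))) [0..<d]"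
  by (simp add: path_arcs_map_upt shift_walk del: upt_Suc)

lemma walk_neg_arc:
  "\<lbrakk>s = 1 \<or> s = -1; i < n\<rbrakk>
   \<Longrightarrow> (walk (-s) x i, walk (-s) x (Suc i)) = (shift s (walk s x (n - Suc i)), walk s x (n - Suc i))"
  using shift_neg_walk[of "-s" x i] walk_neg[of "Suc i" s x] by auto

lemma edge_index_less: "\<lbrakk>s = 1 \<or> s = -1; e \<in> bicycle_arcs n\<rbrakk> \<Longrightarrow> edge_index s e < n"
proof -
  assume s: "s = 1 \<or> s = -1" and "e \<in> bicycle_arcs n"
  then obtain u v where "e = (u, v)" "(u, v) \<in> bicycle_arcs n" by (cases e) auto
  then show ?thesis using bicycle_arc_cases[OF s] by metis
qed

lemma rainbow_merge_colour:
  assumes s: "s = 1 \<or> s = -1" and B: "B \<subseteq> bicycle_arcs n" and dp: "dpath B p x y"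
    and "a \<noteq> b" and "a \<notin> edge_index s ` set (path_arcs p) \<or> b \<notin> edge_index s ` set (path_arcs p)"
  shows "rainbow (merge_colour a b \<circ> edge_index s) p"
  unfolding rainbow_comp_iff
  using distinct_edge_indices[OF s B dp] inj_on_merge_colour[OF assms(4,5)] by simp

lemma dpath_forward_walk:
  assumes s: "s = 1 \<or> s = -1" and "x < n" "d < n" and fwd: "\<And>w. w < n \<Longrightarrow> (w, shift s w) \<in> B"
  shows "dpath B (map (walk s x) [0..<Suc d]) x (walk s x d)"
proof -
  have "dpath B (map (walk s x) [0..<Suc d]) (walk s x 0) (walk s x d)"
  proof (rule dpath_map_upt)
    show "inj_on (walk s x) {0..<Suc d}" by (rule inj_on_subset[OF inj_on_walk[OF s]]) (use \<open>d < n\<close> in auto)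
    show "(walk s x i, walk s x (Suc i)) \<in> B" for i using fwd[OF walk_less[of s x i]] by (simp add: shift_walk)
  qed
  then show ?thesis using walk_0[OF \<open>x < n\<close>] by simp
qed

lemma edge_indices_forward_walk:
  "edge_index s ` set (path_arcs (map (walk s x) [0..<Suc d])) = walk s x ` {0..<d}"
  by (simp add: path_arcs_walk image_image del: upt_Suc)

lemma dpath_backward_walk:
  assumes s: "s = 1 \<or> s = -1" and "x < n" "0 < d" "d < n"
    and reversed: "\<And>m. \<lbrakk>d \<le> m; m < n\<rbrakk> \<Longrightarrow> (shift s (walk s x m), walk s x m) \<in> B"
  shows "dpath B (map (walk (-s) x) [0..<Suc (n - d)]) x (walk s x d)"
proof -
  have ms: "-s = 1 \<or> -s = -1" using s by auto
  have "dpath B (map (walk (-s) x) [0..<Suc (n - d)]) (walk (-s) x 0) (walk (-s) x (n - d))"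
  proof (rule dpath_map_upt)
    show "inj_on (walk (-s) x) {0..<Suc (n - d)}"
      by (rule inj_on_subset[OF inj_on_walk[OF ms]]) (use \<open>0 < d\<close> \<open>d < n\<close> in auto)
    show "(walk (-s) x i, walk (-s) x (Suc i)) \<in> B" if "i < n - d" for i
      using walk_neg_arc[OF s, of i x] reversed[of "n - Suc i"] that by simp
  qed
  then show ?thesis using walk_0[OF \<open>x < n\<close>] walk_neg[of "n - d" s x] \<open>d < n\<close> by simp
qed

lemma edge_indices_backward_walk:
  assumes s: "s = 1 \<or> s = -1"
  shows "edge_index s ` set (path_arcs (map (walk (-s) x) [0..<Suc (n - d)])) \<subseteq> walk s x ` {d..<n}"
proof -
  have "edge_index s (walk (-s) x i, walk (-s) x (Suc i)) \<in> walk s x ` {d..<n}" if "i < n - d" for i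
    using walk_neg_arc[OF s, of i x] edge_index_backward[OF s walk_less] that by auto
  then show ?thesis by (auto simp: path_arcs_map_upt simp del: upt_Suc)
qed

end

locale strong_bicycle_subdigraph = bicycle +
  fixes A :: "(nat \<times> nat) set"
  assumes arcs_subset: "A \<subseteq> bicycle_arcs n"
    and strong: "strongly_connected {0..<n} A"
begin

lemma asym_arc_less: "(u, v) \<in> asym_arcs A \<Longrightarrow> u < n"
  using arcs_subset bicycle_arcs_iff[of 1 u v] unfolding asym_arcs_def by blast

lemma obtain_asym_arc:
  assumes "asym_arcs A \<noteq> {}"
  obtains s t where "s = 1 \<or> s = -1" "(t, shift s t) \<in> asym_arcs A"
proof -
  obtain u v where uv: "(u, v) \<in> asym_arcs A" using assms by auto
  then have "v = shift 1 u \<or> v = shift (-1) u"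
    using arcs_subset bicycle_arcs_iff[of 1 u v] unfolding asym_arcs_def by blast
  then show ?thesis using that uv by auto
qed

lemma dpath_around_asym:
  assumes s: "s = 1 \<or> s = -1" and asym: "(t, shift s t) \<in> asym_arcs A"
  shows "dpath A (map (walk s (shift s t)) [0..<n]) (shift s t) t"
proof -
  have "t < n" using asym_arc_less[OF asym] .
  then obtain p where dp: "dpath A p (shift s t) t"
    using strongly_connected_dpath[OF strong, of "shift s t" t] shift_less shift_neq_self[OF s \<open>t < n\<close>]
    by auto
  moreover have "(shift s t, t) \<notin> A" using asym unfolding asym_arcs_def by simp
  then have "p = map (walk s (shift s t)) [0..<n]" by (rule dpath_around[OF s \<open>t < n\<close> arcs_subset _ dp])
  ultimately show ?thesis by simp
qed

lemma walk_around_image: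
  assumes s: "s = 1 \<or> s = -1" and "t < n"
  shows "walk s (shift s t) ` {0..<n - 1} = {0..<n} - {t}"
proof -
  have around: "walk s (shift s t) (n - 1) = t" using walk_n_minus_1[OF s \<open>t < n\<close>] .
  have "walk s (shift s t) i \<in> {0..<n} - {t}" if "i \<in> {0..<n - 1}" for i
  proof (rule DiffI)
    show "walk s (shift s t) i \<in> {0..<n}" by (simp add: walk_less)
    show "walk s (shift s t) i \<notin> {t}"
    proof
      assume "walk s (shift s t) i \<in> {t}"
      moreover have "i < n" "n - 1 < n" using that three_le by auto
      ultimately have "i = n - 1"
        using inj_onD[OF inj_on_walk[OF s], of "shift s t" i "n - 1"] around by simp
      then show False using that by simp
    qed
  qed
  moreover have "w \<in> walk s (shift s t) ` {0..<n - 1}" if "w \<in> {0..<n} - {t}" for w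
  proof
    let ?i = "offset s (shift s t) w"
    show "w = walk s (shift s t) ?i" using walk_offset[OF s] that by simp
    then have "?i \<noteq> n - 1" using around that by auto
    then show "?i \<in> {0..<n - 1}" using offset_less[of s "shift s t" w] by simp
  qed
  ultimately show ?thesis by (intro equalityI image_subsetI subsetI)
qed

lemma path_arcs_around:
  "path_arcs (map (walk s (shift s t)) [0..<n])
   = map (\<lambda>i. (walk s (shift s t) i, shift s (walk s (shift s t) i))) [0..<n - 1]"
  using path_arcs_walk[of s "shift s t" "n - 1"] three_le by (simp del: upt_Suc)

lemma forward_arcs:
  assumes s: "s = 1 \<or> s = -1" and asym: "(t, shift s t) \<in> asym_arcs A" and "w < n"
  shows "(w, shift s w) \<in> A"
proof (cases "w = t")
  case True
  then show ?thesis using asym unfolding asym_arcs_def by simp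
next
  case False
  then have "w \<in> walk s (shift s t) ` {0..<n - 1}"
    using walk_around_image[OF s asym_arc_less[OF asym]] \<open>w < n\<close> by simp
  then have "(w, shift s w) \<in> set (path_arcs (map (walk s (shift s t)) [0..<n]))"
    unfolding path_arcs_around by auto
  then show ?thesis using dpath_arcs_subset[OF dpath_around_asym[OF s asym]] by blast
qed

lemma asym_arc_shift:
  assumes s: "s = 1 \<or> s = -1" and asym: "(t, shift s t) \<in> asym_arcs A"
    and uv: "(u, v) \<in> asym_arcs A"
  shows "v = shift s u"
proof (rule ccontr)
  assume "v \<noteq> shift s u"
  moreover have "u < n" "v = shift s u \<or> v = shift (-s) u"
    using uv arcs_subset bicycle_arcs_iff[OF s] unfolding asym_arcs_def by auto
  ultimately have "v = shift (-s) u" "shift s v = u" using shift_neg_shift[of "-s" u] s by auto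
  then have "(v, u) \<in> A" using forward_arcs[OF s asym, of v] shift_less by auto
  then show False using uv unfolding asym_arcs_def by simp
qed

lemma card_asym_arcs:
  assumes s: "s = 1 \<or> s = -1" and asym: "(t, shift s t) \<in> asym_arcs A"
  shows "card (asym_arcs A) = card {w. (w, shift s w) \<in> asym_arcs A}"
proof -
  have "asym_arcs A = (\<lambda>w. (w, shift s w)) ` {w. (w, shift s w) \<in> asym_arcs A}"
  proof (intro equalityI subsetI)
    fix e assume "e \<in> asym_arcs A"
    then show "e \<in> (\<lambda>w. (w, shift s w)) ` {w. (w, shift s w) \<in> asym_arcs A}"
      using asym_arc_shift[OF s asym, of "fst e" "snd e"] by (simp add: image_iff) (metis prod.collapse)
  qed auto
  moreover have "inj_on (\<lambda>w. (w, shift s w)) S" for S by (rule inj_onI) simp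
  ultimately show ?thesis by (metis card_image)
qed

lemma inj_on_forward_colours:
  assumes rc: "rainbow_connected {0..<n} A c k"
    and s: "s = 1 \<or> s = -1" and asym: "(t, shift s t) \<in> asym_arcs A"
  shows "inj_on (\<lambda>w. c (w, shift s w)) ({0..<n} - {t})"
proof -
  let ?p = "map (walk s (shift s t)) [0..<n]"
  have "t < n" using asym_arc_less[OF asym] .
  then obtain p where dp: "dpath A p (shift s t) t" and "rainbow c p"
    using rainbow_connected_dpath[OF rc, of "shift s t" t] shift_less shift_neq_self[OF s \<open>t < n\<close>]
    by auto
  moreover have "(shift s t, t) \<notin> A" using asym unfolding asym_arcs_def by simp
  then have "p = ?p" using dpath_around[OF s \<open>t < n\<close> arcs_subset _ dp] by simp
  ultimately have "rainbow c ?p" by simp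
  then have "inj_on ((\<lambda>w. c (w, shift s w)) \<circ> walk s (shift s t)) {0..<n - 1}"
    unfolding rainbow_def path_arcs_around by (simp add: distinct_map comp_def)
  then show ?thesis using inj_on_imageI walk_around_image[OF s \<open>t < n\<close>] by fastforce
qed

lemma forward_colours_range:
  assumes rc: "rainbow_connected {0..<n} A c k"
    and s: "s = 1 \<or> s = -1" and asym: "(t, shift s t) \<in> asym_arcs A"
  shows "(\<lambda>w. c (w, shift s w)) ` {0..<n} \<subseteq> {1..k}"
proof (rule image_subsetI)
  fix w assume "w \<in> {0..<n}"
  then have "(w, shift s w) \<in> A" using forward_arcs[OF s asym] by simp
  then show "c (w, shift s w) \<in> {1..k}" by (rule rainbow_connected_colour_range[OF rc])
qed

lemma rainbow_connected_ge_n_minus_1: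
  assumes rc: "rainbow_connected {0..<n} A c k"
    and s: "s = 1 \<or> s = -1" and asym: "(t, shift s t) \<in> asym_arcs A"
  shows "n - 1 \<le> k"
proof -
  have "card ({0..<n} - {t}) \<le> card {1..k}"
  proof (rule card_inj_on_le)
    show "inj_on (\<lambda>w. c (w, shift s w)) ({0..<n} - {t})" by (rule inj_on_forward_colours[OF assms])
    show "(\<lambda>w. c (w, shift s w)) ` ({0..<n} - {t}) \<subseteq> {1..k}"
      using forward_colours_range[OF assms] by blast
  qed simp
  then show ?thesis using asym_arc_less[OF asym] by simp
qed

lemma rainbow_connected_ge_n:
  assumes rc: "rainbow_connected {0..<n} A c k" and s: "s = 1 \<or> s = -1"
    and three: "3 \<le> card {w. (w, shift s w) \<in> asym_arcs A}"
  shows "n \<le> k"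
proof -
  have "{w. (w, shift s w) \<in> asym_arcs A} \<noteq> {}"
  proof
    assume "{w. (w, shift s w) \<in> asym_arcs A} = {}"
    then show False using three by simp
  qed
  then obtain t where asym: "(t, shift s t) \<in> asym_arcs A" by blast
  have "card {0..<n} \<le> card {1..k}"
  proof (rule card_inj_on_le)
    show "inj_on (\<lambda>w. c (w, shift s w)) {0..<n}"
      using three inj_on_forward_colours[OF rc s] by (rule inj_on_if_inj_on_Diff_singletons) simp
    show "(\<lambda>w. c (w, shift s w)) ` {0..<n} \<subseteq> {1..k}" by (rule forward_colours_range[OF rc s asym])
  qed simp
  then show ?thesis by simp
qed

lemma strongly_rainbow_connected_edge_colouring:
  "strongly_rainbow_connected {0..<n} A (Suc \<circ> edge_index 1) n"
  unfolding strongly_rainbow_connected_def arc_colouring_def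
proof (intro conjI ballI impI)
  fix e assume "e \<in> A"
  then show "(Suc \<circ> edge_index 1) e \<in> {1..n}" using edge_index_less[of 1 e] arcs_subset by auto
next
  fix x y assume xy: "x \<in> {0..<n}" "y \<in> {0..<n}" "x \<noteq> y"
  obtain p where "dpath A p x y" using strongly_connected_dpath[OF strong xy] by blast
  from shortest_dpath[OF this] obtain q where q: "dpath A q x y" "plen q = ddist A x y" by blast
  then have "rainbow (Suc \<circ> edge_index 1) q"
    unfolding rainbow_comp_iff using distinct_edge_indices[of 1, OF _ arcs_subset] by simp
  then show "\<exists>p. dpath A p x y \<and> plen p = ddist A x y \<and> rainbow (Suc \<circ> edge_index 1) p"
    using q by blast
qed

lemma reverse_arc_if_not_asym:
  assumes s: "s = 1 \<or> s = -1" and asym: "(t, shift s t) \<in> asym_arcs A"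
    and "w < n" "(w, shift s w) \<notin> asym_arcs A"
  shows "(shift s w, w) \<in> A"
  using forward_arcs[OF s asym \<open>w < n\<close>] assms(4) unfolding asym_arcs_def by simp

lemma rainbow_dpath_merge_colour:
  assumes s: "s = 1 \<or> s = -1" and asym: "(ta, shift s ta) \<in> asym_arcs A" and "ta \<noteq> tb"
    and tails: "{w. (w, shift s w) \<in> asym_arcs A} \<subseteq> {ta, tb}"
    and xy: "x < n" "y < n" "x \<noteq> y"
  shows "\<exists>p. dpath A p x y \<and> rainbow (merge_colour ta tb \<circ> edge_index s) p"
proof -
  define d where "d = offset s x y"
  have d: "0 < d" "d < n" "walk s x d = y"
    using offset_neq_0[OF s] offset_less walk_offset[OF s] xy unfolding d_def by auto
  show ?thesis
  proof (cases "ta \<in> walk s x ` {0..<d} \<and> tb \<in> walk s x ` {0..<d}")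
    case False
    let ?p = "map (walk s x) [0..<Suc d]"
    have "dpath A ?p x y"
      using dpath_forward_walk[OF s xy(1) \<open>d < n\<close> forward_arcs[OF s asym]] d(3) by (simp del: upt_Suc)
    moreover have "ta \<notin> edge_index s ` set (path_arcs ?p) \<or> tb \<notin> edge_index s ` set (path_arcs ?p)"
      using False by (simp only: edge_indices_forward_walk) blast
    then have "rainbow (merge_colour ta tb \<circ> edge_index s) ?p"
      by (rule rainbow_merge_colour[OF s arcs_subset \<open>dpath A ?p x y\<close> \<open>ta \<noteq> tb\<close>])
    ultimately show ?thesis by blast
  next
    case True
    then have avoid: "walk s x m \<notin> {ta, tb}" if "d \<le> m" "m < n" for m
      using inj_onD[OF inj_on_walk[OF s]] that \<open>d < n\<close> by fastforce
    let ?p = "map (walk (-s) x) [0..<Suc (n - d)]"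
    have "(shift s (walk s x m), walk s x m) \<in> A" if "d \<le> m" "m < n" for m
    proof (rule reverse_arc_if_not_asym[OF s asym walk_less])
      show "(walk s x m, shift s (walk s x m)) \<notin> asym_arcs A" using avoid[OF that] tails by blast
    qed
    then have "dpath A ?p x (walk s x d)" by (rule dpath_backward_walk[OF s xy(1) d(1,2)])
    then have "dpath A ?p x y" using d(3) by (simp del: upt_Suc)
    moreover have "ta \<notin> edge_index s ` set (path_arcs ?p)"
      using edge_indices_backward_walk[OF s, of x d] avoid \<open>d < n\<close> by fastforce
    then have "rainbow (merge_colour ta tb \<circ> edge_index s) ?p"
      using rainbow_merge_colour[OF s arcs_subset \<open>dpath A ?p x y\<close> \<open>ta \<noteq> tb\<close>] by simp
    ultimately show ?thesis by blast
  qed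
qed

lemma rainbow_connected_merge_colour:
  assumes s: "s = 1 \<or> s = -1" and asym: "(ta, shift s ta) \<in> asym_arcs A"
    and "tb < n" "ta \<noteq> tb" and tails: "{w. (w, shift s w) \<in> asym_arcs A} \<subseteq> {ta, tb}"
  shows "rainbow_connected {0..<n} A (merge_colour ta tb \<circ> edge_index s) (n - 1)"
  unfolding rainbow_connected_def arc_colouring_def
proof (intro conjI ballI impI)
  fix e assume "e \<in> A"
  then have "edge_index s e < n" using arcs_subset edge_index_less[OF s] by blast
  then show "(merge_colour ta tb \<circ> edge_index s) e \<in> {1..n - 1}"
    using merge_colour_range[OF asym_arc_less[OF asym] \<open>tb < n\<close> \<open>ta \<noteq> tb\<close>] by simp
next
  fix x y assume "x \<in> {0..<n}" "y \<in> {0..<n}" "x \<noteq> y"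
  then show "\<exists>p. dpath A p x y \<and> rainbow (merge_colour ta tb \<circ> edge_index s) p"
    using rainbow_dpath_merge_colour[OF s asym \<open>ta \<noteq> tb\<close> tails] by simp
qed

lemma rc_eq_n_minus_1:
  assumes s: "s = 1 \<or> s = -1" and asym: "(t, shift s t) \<in> asym_arcs A"
    and two: "card {w. (w, shift s w) \<in> asym_arcs A} \<le> 2"
  shows "rc {0..<n} A = n - 1"
proof -
  have "{w. (w, shift s w) \<in> asym_arcs A} \<subseteq> {0..<n}" using asym_arc_less by auto
  then obtain tb where "tb \<in> {0..<n}" "tb \<noteq> t" "{w. (w, shift s w) \<in> asym_arcs A} \<subseteq> {t, tb}"
    using obtain_pair_superset[OF two, of t "{0..<n}"] asym three_le by auto
  then have "rainbow_connected {0..<n} A (merge_colour t tb \<circ> edge_index s) (n - 1)"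
    using rainbow_connected_merge_colour[OF s asym] by auto
  then show ?thesis using rainbow_connected_ge_n_minus_1[OF _ s asym] by (rule rc_eqI)
qed

lemma rc_src_eq_n:
  assumes s: "s = 1 \<or> s = -1" and three: "3 \<le> card {w. (w, shift s w) \<in> asym_arcs A}"
  shows "rc {0..<n} A = n \<and> src {0..<n} A = n"
proof
  have lower: "n \<le> k" if "rainbow_connected {0..<n} A c k" for c k
    using rainbow_connected_ge_n[OF that s three] .
  show "rc {0..<n} A = n"
    using rainbow_connected_if_strongly[OF strongly_rainbow_connected_edge_colouring] lower
    by (rule rc_eqI)
  show "src {0..<n} A = n"
    using strongly_rainbow_connected_edge_colouring lower[OF rainbow_connected_if_strongly]
    by (rule src_eqI)
qed

end

theorem theorem4:
  fixes n :: nat and A :: "(nat \<times> nat) set"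
  assumes "n \<ge> 3"
    and "A \<subseteq> bicycle_arcs n"
    and "strongly_connected {0..<n} A"
    and "card (asym_arcs A) \<ge> 1"
  shows "(card (asym_arcs A) \<le> 2 \<longrightarrow> rc {0..<n} A = n - 1)
       \<and> (card (asym_arcs A) \<ge> 3 \<longrightarrow> rc {0..<n} A = n \<and> src {0..<n} A = n)"
proof -
  interpret strong_bicycle_subdigraph n A using assms(1-3) by unfold_locales
  have "asym_arcs A \<noteq> {}" using assms(4) by auto
  then obtain s t where s: "s = 1 \<or> s = -1" and asym: "(t, shift s t) \<in> asym_arcs A"
    by (rule obtain_asym_arc)
  show ?thesis
    using rc_eq_n_minus_1[OF s asym] rc_src_eq_n[OF s] card_asym_arcs[OF s asym] by simp
qed

end
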